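(* In the supersample setting described in the context, let $\ell$ be the zero-one loss and let $\mathcal A$ be an interpolating algorithm. Then \[ \frac{1}{n}\sum_{i=1}^nI(L^+_{i};U_i)\leq H\!\left(\frac{L_\mu}{2}\right). \]
   Context: Let $\mathcal Z=\mathcal X\times\mathcal Y$ and let $\mu$ be a distribution on $\mathcal Z$. A (possibly randomized) learning algorithm $\mathcal A$ maps a training sample in $\mathcal Z^n$ to a hypothesis $W\in\mathcal W$; each $w$ defines a predictor $f_w:\mathcal X\to\mathcal Y$, and the zero-one loss is $\ell(w,(x,y))=\mathbb 1\{f_w(x)\neq y\}$. For $S\sim\mu^n$ and $W\sim P_{W|S}$, $L_\mu=\mathbb E_W\mathbb E_{Z'\sim\mu}[\ell(W,Z')]$ with $Z'$ independent of $(S,W)$. Supersample: $\widetilde Z=(\widetilde Z_{i,j})_{i\in\{1,\dots,n\},j\in\{0,1\}}$ with i.i.d. entries of law $\mu$; $U=(U_1,\dots,U_n)$ uniform on $\{0,1\}^n$, independent of $\widetilde Z$; $W=\mathcal A(\widetilde Z_U)$ with $\widetilde Z_U=(\widetilde Z_{1,U_1},\dots,\widetilde Z_{n,U_n})$; $L_i^+=\ell(W,\widetilde Z_{i,0})$. The algorithm is interpolating if $\ell(W,\widetilde Z_{i,U_i})=0$ almost surely for every $i$. $H(p)=-p\ln p-(1-p)\ln(1-p)$ is the binary entropy function and mutual information is in nats. *)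

theory Defs
  imports "HOL-Probability.Probability"
begin

text \<open>Binary entropy in nats (the terms p ln p vanish at p = 0 by multiplication).\<close>
definition bin_entropy :: "real \<Rightarrow> real" where
  "bin_entropy p = - p * ln p - (1 - p) * ln (1 - p)"

definition zo_loss :: "('w \<Rightarrow> 'x \<Rightarrow> 'y) \<Rightarrow> 'w \<Rightarrow> 'x \<times> 'y \<Rightarrow> nat" where
  "zo_loss f w z = (if f w (fst z) \<noteq> snd z then 1 else 0)"

text \<open>Supersample: entries indexed by (i,j) with i < n and j :: bool (False = 0, True = 1).\<close>
definition supersample_space :: "nat \<Rightarrow> ('x \<times> 'y) measure \<Rightarrow> ((nat \<times> bool) \<Rightarrow> 'x \<times> 'y) measure" where
  "supersample_space n \<mu> = PiM ({..<n} \<times> UNIV) (\<lambda>_. \<mu>)"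

definition selector_space :: "nat \<Rightarrow> (nat \<Rightarrow> bool) measure" where
  "selector_space n = PiM {..<n} (\<lambda>_. measure_pmf (bernoulli_pmf (1/2)))"

definition selected_sample :: "nat \<Rightarrow> ((nat \<times> bool) \<Rightarrow> 'z) \<Rightarrow> (nat \<Rightarrow> bool) \<Rightarrow> (nat \<Rightarrow> 'z)" where
  "selected_sample n zt u = restrict (\<lambda>i. zt (i, u i)) {..<n}"

text \<open>Joint law of ((Z~, U), W) where W ~ A(Z~_U), A a (randomized) algorithm given as a Markov kernel
  from samples to hypotheses (measurable space Wsp).\<close>
definition joint_law ::
  "nat \<Rightarrow> ('x \<times> 'y) measure \<Rightarrow> 'w measure \<Rightarrow> ((nat \<Rightarrow> 'x \<times> 'y) \<Rightarrow> 'w measure)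
     \<Rightarrow> ((((nat \<times> bool) \<Rightarrow> 'x \<times> 'y) \<times> (nat \<Rightarrow> bool)) \<times> 'w) measure" where
  "joint_law n \<mu> Wsp A =
     (supersample_space n \<mu> \<Otimes>\<^sub>M selector_space n) \<bind>
       (\<lambda>zu. distr (A (selected_sample n (fst zu) (snd zu)))
                   ((supersample_space n \<mu> \<Otimes>\<^sub>M selector_space n) \<Otimes>\<^sub>M Wsp)
                   (\<lambda>w. (zu, w)))"

definition pop_risk ::
  "nat \<Rightarrow> ('x \<times> 'y) measure \<Rightarrow> 'w measure \<Rightarrow> ((nat \<Rightarrow> 'x \<times> 'y) \<Rightarrow> 'w measure)
     \<Rightarrow> ('w \<Rightarrow> 'x \<Rightarrow> 'y) \<Rightarrow> real" where
  "pop_risk n \<mu> Wsp A f =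
     (\<integral>\<omega>. (\<integral>z. real (zo_loss f (snd \<omega>) z) \<partial>\<mu>) \<partial>joint_law n \<mu> Wsp A)"

definition Lplus :: "('w \<Rightarrow> 'x \<Rightarrow> 'y) \<Rightarrow> nat \<Rightarrow>
     ((((nat \<times> bool) \<Rightarrow> 'x \<times> 'y) \<times> (nat \<Rightarrow> bool)) \<times> 'w) \<Rightarrow> nat" where
  "Lplus f i \<omega> = zo_loss f (snd \<omega>) (fst (fst \<omega>) (i, False))"

definition Usel :: "nat \<Rightarrow> ((((nat \<times> bool) \<Rightarrow> 'x \<times> 'y) \<times> (nat \<Rightarrow> bool)) \<times> 'w) \<Rightarrow> bool" where
  "Usel i \<omega> = snd (fst \<omega>) i"

end

theory Submission
  imports Defs
begin

(*
  Fix a coordinate i. If U_i = 0 the example Z~_{i,0} is part of the training sample, so an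
  interpolating algorithm has L_i^+ = 0 almost surely. If U_i = 1 it is a fresh example independent
  of the training sample, so P(L_i^+ = 1, U_i = 1) = L_mu / 2. Hence L_i^+ is a {0,1}-valued
  variable with P(L_i^+ = 1) = L_mu / 2, and I(L_i^+; U_i) <= H(L_i^+) = H(L_mu / 2).
*)

lemma (in prob_space) distributed_count_space_countable:
  fixes X :: "'a \<Rightarrow> 'b::countable"
  assumes X[measurable]: "X \<in> M \<rightarrow>\<^sub>M count_space UNIV"
  shows "distributed M (count_space UNIV) X (\<lambda>x. ennreal \<P>(\<omega> in M. X \<omega> = x))"
  unfolding distributed_def
proof (intro conjI)
  show "distr M (count_space UNIV) X = density (count_space UNIV) (\<lambda>x. ennreal \<P>(\<omega> in M. X \<omega> = x))"
  proof (rule measure_eqI_countable[where A=UNIV])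
    fix x :: 'b
    have "emeasure (distr M (count_space UNIV) X) {x} = emeasure M {\<omega> \<in> space M. X \<omega> = x}"
      by (subst emeasure_distr) (auto intro!: arg_cong2[where f=emeasure])
    then show "emeasure (distr M (count_space UNIV) X) {x}
        = emeasure (density (count_space UNIV) (\<lambda>x. ennreal \<P>(\<omega> in M. X \<omega> = x))) {x}"
      by (simp add: emeasure_density nn_integral_indicator_singleton emeasure_eq_measure)
  qed auto
qed auto

lemma (in prob_space) mutual_information_count_space_finite:
  fixes X :: "'a \<Rightarrow> 'b::countable" and Y :: "'a \<Rightarrow> 'c::countable"
  assumes [measurable]: "X \<in> M \<rightarrow>\<^sub>M count_space UNIV" "Y \<in> M \<rightarrow>\<^sub>M count_space UNIV"
    and "finite B" and range: "(\<lambda>\<omega>. (X \<omega>, Y \<omega>)) ` space M \<subseteq> B"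
  shows "mutual_information (exp 1) (count_space UNIV) (count_space UNIV) X Y
     = (\<Sum>p\<in>B. \<P>(\<omega> in M. (X \<omega>, Y \<omega>) = p) *
          ln (\<P>(\<omega> in M. (X \<omega>, Y \<omega>) = p) / (\<P>(\<omega> in M. X \<omega> = fst p) * \<P>(\<omega> in M. Y \<omega> = snd p))))"
proof -
  interpret information_space M "exp 1"
    by standard simp
  define Pxy where "Pxy p = \<P>(\<omega> in M. (X \<omega>, Y \<omega>) = p)" for p
  have UNIV_pair: "count_space UNIV \<Otimes>\<^sub>M count_space UNIV = (count_space UNIV :: ('b \<times> 'c) measure)"
    by (simp add: pair_measure_countable)
  have "(\<lambda>\<omega>. (X \<omega>, Y \<omega>)) \<in> M \<rightarrow>\<^sub>M count_space UNIV"
    unfolding UNIV_pair[symmetric] by measurable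
  then have "distributed M (count_space UNIV \<Otimes>\<^sub>M count_space UNIV) (\<lambda>\<omega>. (X \<omega>, Y \<omega>)) Pxy"
    unfolding UNIV_pair Pxy_def by (rule distributed_count_space_countable)
  then have "mutual_information (exp 1) (count_space UNIV) (count_space UNIV) X Y
     = (\<integral>p. Pxy p * log (exp 1) (Pxy p / (\<P>(\<omega> in M. X \<omega> = fst p) * \<P>(\<omega> in M. Y \<omega> = snd p)))
          \<partial>count_space UNIV)"
    unfolding UNIV_pair[symmetric]
    by (intro mutual_information_distr distributed_count_space_countable
        sigma_finite_measure_count_space_countable) (auto simp: Pxy_def)
  also have "\<dots> = (\<Sum>p\<in>B. Pxy p * ln (Pxy p / (\<P>(\<omega> in M. X \<omega> = fst p) * \<P>(\<omega> in M. Y \<omega> = snd p))))"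
  proof -
    have "Pxy p = 0" if "p \<notin> B" for p
    proof -
      have "{\<omega> \<in> space M. (X \<omega>, Y \<omega>) = p} = {}"
        using range that by auto
      then show ?thesis unfolding Pxy_def by (metis measure_empty)
    qed
    then show ?thesis
      using \<open>finite B\<close>
      by (subst lebesgue_integral_count_space_finite_support)
        (auto simp: log_def intro!: sum.mono_neutral_cong_left finite_subset[of _ B])
  qed
  finally show ?thesis
    by (simp add: Pxy_def)
qed

lemma mult_ln_div_le:
  fixes a b c :: real
  assumes "0 \<le> a" "a \<le> b" "a \<le> c"
  shows "a * ln (a / (b * c)) \<le> - a * ln b"
proof (cases "a = 0")
  case False
  then have "0 < a" "0 < b" "0 < c"
    using assms by auto
  then have "ln (a / (b * c)) \<le> ln (1 / b)"
    using assms by (subst ln_le_cancel_iff) (auto simp: field_simps)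
  then have "a * ln (a / (b * c)) \<le> a * ln (1 / b)"
    using \<open>0 < a\<close> by (simp add: mult_left_mono)
  then show ?thesis
    using \<open>0 < b\<close> by (simp add: ln_div)
qed simp

lemma (in prob_space) mutual_information_le_entropy_finite:
  fixes X :: "'a \<Rightarrow> 'b::countable" and Y :: "'a \<Rightarrow> 'c::countable"
  assumes [measurable]: "X \<in> M \<rightarrow>\<^sub>M count_space UNIV" "Y \<in> M \<rightarrow>\<^sub>M count_space UNIV"
    and "finite BX" "finite BY" and range: "X ` space M \<subseteq> BX" "Y ` space M \<subseteq> BY"
  shows "mutual_information (exp 1) (count_space UNIV) (count_space UNIV) X Y
     \<le> - (\<Sum>x\<in>BX. \<P>(\<omega> in M. X \<omega> = x) * ln \<P>(\<omega> in M. X \<omega> = x))"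
proof -
  define Pxy where "Pxy p = \<P>(\<omega> in M. (X \<omega>, Y \<omega>) = p)" for p
  have marginal: "\<P>(\<omega> in M. X \<omega> = x) = (\<Sum>y\<in>BY. Pxy (x, y))" for x
    unfolding Pxy_def using range by (intro prob_sum \<open>finite BY\<close> AE_I2) auto
  have "mutual_information (exp 1) (count_space UNIV) (count_space UNIV) X Y
     = (\<Sum>p\<in>BX \<times> BY. Pxy p * ln (Pxy p / (\<P>(\<omega> in M. X \<omega> = fst p) * \<P>(\<omega> in M. Y \<omega> = snd p))))"
    unfolding Pxy_def using range \<open>finite BX\<close> \<open>finite BY\<close>
    by (intro mutual_information_count_space_finite) auto
  also have "\<dots> \<le> (\<Sum>p\<in>BX \<times> BY. - Pxy p * ln \<P>(\<omega> in M. X \<omega> = fst p))"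
    unfolding Pxy_def by (intro sum_mono mult_ln_div_le measure_nonneg finite_measure_mono) auto
  also have "\<dots> = - (\<Sum>x\<in>BX. (\<Sum>y\<in>BY. Pxy (x, y)) * ln \<P>(\<omega> in M. X \<omega> = x))"
    by (simp add: sum.cartesian_product' sum_distrib_right sum_negf)
  also have "\<dots> = - (\<Sum>x\<in>BX. \<P>(\<omega> in M. X \<omega> = x) * ln \<P>(\<omega> in M. X \<omega> = x))"
    by (simp only: marginal)
  finally show ?thesis .
qed

lemma (in prob_space) mutual_information_le_bin_entropy:
  fixes X :: "'a \<Rightarrow> nat" and Y :: "'a \<Rightarrow> 'c::countable"
  assumes [measurable]: "X \<in> M \<rightarrow>\<^sub>M count_space UNIV" "Y \<in> M \<rightarrow>\<^sub>M count_space UNIV"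
    and "X ` space M \<subseteq> {0, 1}" "finite BY" "Y ` space M \<subseteq> BY"
  shows "mutual_information (exp 1) (count_space UNIV) (count_space UNIV) X Y
     \<le> bin_entropy \<P>(\<omega> in M. X \<omega> = 1)"
proof -
  have "{\<omega> \<in> space M. X \<omega> = 0} = space M - {\<omega> \<in> space M. X \<omega> = 1}"
    using assms(3) by auto
  then have "\<P>(\<omega> in M. X \<omega> = 0) = 1 - \<P>(\<omega> in M. X \<omega> = 1)"
    by (simp add: prob_compl)
  with mutual_information_le_entropy_finite[of X Y "{0, 1}" BY] assms show ?thesis
    by (simp add: bin_entropy_def)
qed

lemma bin_entropy_nonneg:
  assumes "0 \<le> p" "p \<le> 1"
  shows "0 \<le> bin_entropy p"
proof -
  have "x * ln x \<le> 0" if "0 \<le> x" "x \<le> 1" for x :: real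
    using that by (cases "x = 0") (auto intro: mult_nonneg_nonpos)
  from this[of p] this[of "1 - p"] assms show ?thesis
    by (simp add: bin_entropy_def)
qed

locale supersample_learning =
  fixes n :: nat
    and \<mu> :: "('x \<times> 'y) measure"
    and Wsp :: "'w measure"
    and A :: "(nat \<Rightarrow> 'x \<times> 'y) \<Rightarrow> 'w measure"
    and f :: "'w \<Rightarrow> 'x \<Rightarrow> 'y"
  assumes prob_space_\<mu>: "prob_space \<mu>"
    and measurable_A[measurable]: "A \<in> PiM {..<n} (\<lambda>_. \<mu>) \<rightarrow>\<^sub>M prob_algebra Wsp"
    and measurable_loss[measurable]: "(\<lambda>p. zo_loss f (fst p) (snd p)) \<in> Wsp \<Otimes>\<^sub>M \<mu> \<rightarrow>\<^sub>M count_space UNIV"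
begin

sublocale \<mu>: prob_space \<mu>
  by (rule prob_space_\<mu>)

abbreviation "ZS \<equiv> supersample_space n \<mu>"
abbreviation "US \<equiv> selector_space n"
abbreviation "ZU \<equiv> ZS \<Otimes>\<^sub>M US"
abbreviation "SS \<equiv> PiM {..<n} (\<lambda>_. \<mu>)"
abbreviation "J \<equiv> joint_law n \<mu> Wsp A"

lemma measurable_selected_sample[measurable]:
  "(\<lambda>zu. selected_sample n (fst zu) (snd zu)) \<in> ZU \<rightarrow>\<^sub>M SS"
  unfolding selected_sample_def
proof (rule measurable_restrict)
  fix i :: nat
  have "(\<lambda>zu. fst zu (i, snd zu i)) = (\<lambda>zu. if snd zu i then fst zu (i, True) else fst zu (i, False))"
    by (auto simp: fun_eq_iff)
  moreover assume "i \<in> {..<n}"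
  ultimately show "(\<lambda>zu. fst zu (i, snd zu i)) \<in> ZU \<rightarrow>\<^sub>M \<mu>"
    by (simp add: supersample_space_def selector_space_def)
qed

lemma measurable_selected_sample_fixed[measurable]: "(\<lambda>z. selected_sample n z u) \<in> ZS \<rightarrow>\<^sub>M SS"
  unfolding selected_sample_def supersample_space_def
  by (rule measurable_restrict) auto

lemma measurable_supersample_coord:
  "i < n \<Longrightarrow> g \<in> M \<rightarrow>\<^sub>M ZS \<Longrightarrow> (\<lambda>x. g x (i, b)) \<in> M \<rightarrow>\<^sub>M \<mu>"
  unfolding supersample_space_def
  by (erule measurable_compose[OF _ measurable_component_singleton]) simp

lemma measurable_selector_coord:
  "i < n \<Longrightarrow> g \<in> M \<rightarrow>\<^sub>M US \<Longrightarrow> (\<lambda>x. g x i) \<in> M \<rightarrow>\<^sub>M count_space UNIV"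
  unfolding selector_space_def
  by (erule measurable_compose) (rule measurable_compose[OF measurable_component_singleton]; simp)

lemma measurable_loss_comp[measurable (raw)]:
  "g \<in> M \<rightarrow>\<^sub>M Wsp \<Longrightarrow> h \<in> M \<rightarrow>\<^sub>M \<mu> \<Longrightarrow> (\<lambda>x. zo_loss f (g x) (h x)) \<in> M \<rightarrow>\<^sub>M count_space UNIV"
  using measurable_compose[OF measurable_Pair measurable_loss] by simp

lemma prob_space_ZS: "prob_space ZS"
  unfolding supersample_space_def by (intro prob_space_PiM prob_space_\<mu>)

lemma prob_space_US: "prob_space US"
  unfolding selector_space_def by (intro prob_space_PiM prob_space_measure_pmf)

lemma prob_space_A: "s \<in> space SS \<Longrightarrow> prob_space (A s)"
  and sets_A: "s \<in> space SS \<Longrightarrow> sets (A s) = sets Wsp"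
  using measurable_space[OF measurable_A] by (simp_all add: space_prob_algebra)

definition joint_kernel where
  "joint_kernel zu = distr (A (selected_sample n (fst zu) (snd zu))) (ZU \<Otimes>\<^sub>M Wsp) (\<lambda>w. (zu, w))"

lemma measurable_joint_kernel[measurable]: "joint_kernel \<in> ZU \<rightarrow>\<^sub>M prob_algebra (ZU \<Otimes>\<^sub>M Wsp)"
  unfolding joint_kernel_def by measurable

lemma joint_law_eq_bind: "J = ZU \<bind> joint_kernel"
  unfolding joint_law_def joint_kernel_def[abs_def] ..

lemma prob_space_ZU: "prob_space ZU"
  using prob_space_ZS prob_space_US by (rule prob_space_pair)

lemma prob_space_J: "prob_space J"
  unfolding joint_law_eq_bind
  by (rule prob_space_bind'[OF _ measurable_joint_kernel]) (simp add: space_prob_algebra prob_space_ZU)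

lemma sets_J[measurable_cong]: "sets J = sets (ZU \<Otimes>\<^sub>M Wsp)"
  unfolding joint_law_eq_bind
  by (rule sets_bind'[OF _ measurable_joint_kernel]) (simp add: space_prob_algebra prob_space_ZU)

sublocale J: prob_space J
  by (rule prob_space_J)

lemma space_J: "space J = space (ZU \<Otimes>\<^sub>M Wsp)"
  by (rule sets_eq_imp_space_eq[OF sets_J])

lemma nn_integral_J:
  assumes [measurable]: "h \<in> borel_measurable (ZU \<Otimes>\<^sub>M Wsp)"
  shows "(\<integral>\<^sup>+\<omega>. h \<omega> \<partial>J) = (\<integral>\<^sup>+zu. \<integral>\<^sup>+w. h (zu, w) \<partial>A (selected_sample n (fst zu) (snd zu)) \<partial>ZU)"
proof -
  have "(\<integral>\<^sup>+\<omega>. h \<omega> \<partial>J) = (\<integral>\<^sup>+zu. \<integral>\<^sup>+\<omega>. h \<omega> \<partial>joint_kernel zu \<partial>ZU)"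
    unfolding joint_law_eq_bind
    by (rule nn_integral_bind[OF assms measurable_prob_algebraD[OF measurable_joint_kernel]])
  also have "\<dots> = (\<integral>\<^sup>+zu. \<integral>\<^sup>+w. h (zu, w) \<partial>A (selected_sample n (fst zu) (snd zu)) \<partial>ZU)"
  proof (rule nn_integral_cong)
    fix zu assume zu: "zu \<in> space ZU"
    then have "selected_sample n (fst zu) (snd zu) \<in> space SS"
      using measurable_space[OF measurable_selected_sample] by blast
    with zu have "(\<lambda>w. (zu, w)) \<in> A (selected_sample n (fst zu) (snd zu)) \<rightarrow>\<^sub>M ZU \<Otimes>\<^sub>M Wsp"
      by (simp add: measurable_cong_sets[OF sets_A refl])
    then show "(\<integral>\<^sup>+\<omega>. h \<omega> \<partial>joint_kernel zu) = (\<integral>\<^sup>+w. h (zu, w) \<partial>A (selected_sample n (fst zu) (snd zu)))"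
      unfolding joint_kernel_def by (subst nn_integral_distr) auto
  qed
  finally show ?thesis .
qed

lemma nn_integral_ZU:
  assumes "h \<in> borel_measurable ZU"
  shows "integral\<^sup>N ZU h = (\<integral>\<^sup>+u. \<integral>\<^sup>+z. h (z, u) \<partial>ZS \<partial>US)"
proof -
  interpret pair_sigma_finite ZS US
    using prob_space_ZS prob_space_US by (intro pair_sigma_finite.intro prob_space_imp_sigma_finite)
  show ?thesis
    using assms by (rule nn_integral_snd[symmetric])
qed

lemma distr_selected_sample: "distr ZS SS (\<lambda>z. selected_sample n z u) = SS"
proof -
  have "distr (PiM ({..<n} \<times> UNIV) (\<lambda>_. \<mu>)) (PiM {..<n} (\<lambda>i. (\<lambda>_. \<mu>) ((\<lambda>i. (i, u i)) i)))
     (\<lambda>\<omega>. \<lambda>i\<in>{..<n}. \<omega> ((\<lambda>i. (i, u i)) i)) = PiM {..<n} (\<lambda>i. (\<lambda>_. \<mu>) ((\<lambda>i. (i, u i)) i))"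
    by (rule distr_PiM_reindex) (auto simp: prob_space_\<mu> inj_on_def)
  then show ?thesis
    by (simp add: supersample_space_def selected_sample_def)
qed

definition test_loss :: "(nat \<Rightarrow> 'x \<times> 'y) \<Rightarrow> 'x \<times> 'y \<Rightarrow> ennreal" where
  "test_loss s z = (\<integral>\<^sup>+w. ennreal (zo_loss f w z) \<partial>A s)"

definition risk :: "(nat \<Rightarrow> 'x \<times> 'y) \<Rightarrow> ennreal" where
  "risk s = (\<integral>\<^sup>+z. test_loss s z \<partial>\<mu>)"

definition expected_risk :: ennreal where
  "expected_risk = (\<integral>\<^sup>+s. risk s \<partial>SS)"

lemma measurable_test_loss[measurable]: "(\<lambda>(s, z). test_loss s z) \<in> borel_measurable (SS \<Otimes>\<^sub>M \<mu>)"
proof -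
  note measurable_prob_algebraD[OF measurable_A, measurable]
  have "(\<lambda>p. \<integral>\<^sup>+w. ennreal (zo_loss f w (snd p)) \<partial>A (fst p)) \<in> borel_measurable (SS \<Otimes>\<^sub>M \<mu>)"
    by (rule nn_integral_measurable_subprob_algebra2) measurable
  then show ?thesis
    by (simp add: test_loss_def case_prod_beta')
qed

lemma measurable_risk[measurable]: "risk \<in> borel_measurable SS"
  unfolding risk_def using \<mu>.borel_measurable_nn_integral[OF measurable_test_loss] by simp

lemma nn_integral_risk_selected: "(\<integral>\<^sup>+z. risk (selected_sample n z u) \<partial>ZS) = expected_risk"
proof -
  have "(\<integral>\<^sup>+z. risk (selected_sample n z u) \<partial>ZS)
      = (\<integral>\<^sup>+s. risk s \<partial>distr ZS SS (\<lambda>z. selected_sample n z u))"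
    by (subst nn_integral_distr) auto
  then show ?thesis
    by (simp add: distr_selected_sample expected_risk_def)
qed

lemma nn_integral_risk_ZU: "(\<integral>\<^sup>+zu. risk (selected_sample n (fst zu) (snd zu)) \<partial>ZU) = expected_risk"
  using prob_space.emeasure_space_1[OF prob_space_US]
  by (subst nn_integral_ZU) (auto simp: nn_integral_risk_selected)

lemma nn_integral_loss_A:
  assumes s: "s \<in> space SS"
  shows "(\<integral>\<^sup>+w. \<integral>\<^sup>+z. ennreal (zo_loss f w z) \<partial>\<mu> \<partial>A s) = risk s"
proof -
  interpret pair_sigma_finite "A s" \<mu>
    by (intro pair_sigma_finite.intro prob_space_imp_sigma_finite prob_space_A s prob_space_\<mu>)
  have "(\<lambda>(w, z). ennreal (zo_loss f w z)) \<in> borel_measurable (A s \<Otimes>\<^sub>M \<mu>)"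
    by (subst measurable_cong_sets[OF sets_pair_measure_cong[OF sets_A[OF s] refl] refl]) measurable
  then show ?thesis
    unfolding risk_def test_loss_def by (rule Fubini'[symmetric])
qed

lemma nn_integral_J_loss: "(\<integral>\<^sup>+\<omega>. \<integral>\<^sup>+z. ennreal (zo_loss f (snd \<omega>) z) \<partial>\<mu> \<partial>J) = expected_risk"
proof -
  have "(\<integral>\<^sup>+\<omega>. \<integral>\<^sup>+z. ennreal (zo_loss f (snd \<omega>) z) \<partial>\<mu> \<partial>J)
     = (\<integral>\<^sup>+zu. \<integral>\<^sup>+w. \<integral>\<^sup>+z. ennreal (zo_loss f w z) \<partial>\<mu> \<partial>A (selected_sample n (fst zu) (snd zu)) \<partial>ZU)"
    by (subst nn_integral_J) auto
  also have "\<dots> = (\<integral>\<^sup>+zu. risk (selected_sample n (fst zu) (snd zu)) \<partial>ZU)"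
    by (intro nn_integral_cong nn_integral_loss_A measurable_space[OF measurable_selected_sample])
  finally show ?thesis
    by (simp add: nn_integral_risk_ZU)
qed

lemma nn_integral_loss_le_1: "(\<integral>\<^sup>+z. ennreal (zo_loss f w z) \<partial>\<mu>) \<le> 1"
proof -
  have "(\<integral>\<^sup>+z. ennreal (zo_loss f w z) \<partial>\<mu>) \<le> (\<integral>\<^sup>+z. 1 \<partial>\<mu>)"
    by (intro nn_integral_mono) (simp add: zo_loss_def)
  then show ?thesis
    by (simp add: \<mu>.emeasure_space_1)
qed

lemma expected_risk_le_1: "expected_risk \<le> 1"
proof -
  have "expected_risk \<le> (\<integral>\<^sup>+\<omega>. 1 \<partial>J)"
    unfolding nn_integral_J_loss[symmetric] by (intro nn_integral_mono nn_integral_loss_le_1)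
  then show ?thesis
    by (simp add: J.emeasure_space_1)
qed

lemma expected_risk_eq_pop_risk: "expected_risk = ennreal (pop_risk n \<mu> Wsp A f)"
proof -
  have inner: "ennreal (\<integral>z. zo_loss f w z \<partial>\<mu>) = (\<integral>\<^sup>+z. ennreal (zo_loss f w z) \<partial>\<mu>)"
    if "w \<in> space Wsp" for w
  proof -
    have "(\<lambda>z. real (zo_loss f w z)) \<in> borel_measurable \<mu>"
      using that by measurable
    then show ?thesis
      by (intro nn_integral_eq_integral[symmetric] \<mu>.integrable_const_bound[where B=1])
        (auto simp: zo_loss_def)
  qed
  have bounded: "\<bar>\<integral>z. zo_loss f w z \<partial>\<mu>\<bar> \<le> 1" if "w \<in> space Wsp" for w
  proof -
    have "ennreal (\<integral>z. zo_loss f w z \<partial>\<mu>) \<le> 1"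
      using inner[OF that] nn_integral_loss_le_1[of w] by simp
    then show ?thesis
      by (simp add: ennreal_le_1)
  qed
  have "(\<lambda>\<omega>. \<integral>z. zo_loss f (snd \<omega>) z \<partial>\<mu>) \<in> borel_measurable J"
    by (subst measurable_cong_sets[OF sets_J refl]) measurable
  then have "ennreal (pop_risk n \<mu> Wsp A f) = (\<integral>\<^sup>+\<omega>. ennreal (\<integral>z. zo_loss f (snd \<omega>) z \<partial>\<mu>) \<partial>J)"
    unfolding pop_risk_def using bounded
    by (intro nn_integral_eq_integral[symmetric] J.integrable_const_bound[where B=1])
      (auto simp: space_J space_pair_measure)
  also have "\<dots> = expected_risk"
    by (subst nn_integral_J_loss[symmetric], intro nn_integral_cong inner)
      (auto simp: space_J space_pair_measure)
  finally show ?thesis ..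
qed

lemma pop_risk_nonneg: "0 \<le> pop_risk n \<mu> Wsp A f"
  unfolding pop_risk_def by (intro integral_nonneg_AE AE_I2 integral_nonneg_AE) simp

lemma pop_risk_le_1: "pop_risk n \<mu> Wsp A f \<le> 1"
  using expected_risk_le_1 by (simp add: expected_risk_eq_pop_risk ennreal_le_1)

lemma nn_integral_test_loss_ghost:
  assumes "i < n" and "u i"
  shows "(\<integral>\<^sup>+z. test_loss (selected_sample n z u) (z (i, False)) \<partial>ZS) = expected_risk"
proof -
  define p where "p = (i, False)"
  \<comment> \<open>Since \<open>u i\<close>, the entry \<open>p\<close> is held out of the selected sample, so integrating it out
    first turns the test loss into the risk of the selected sample.\<close>
  define I where "I = {..<n} \<times> (UNIV :: bool set) - {p}"
  interpret product_sigma_finite "\<lambda>_::nat \<times> bool. \<mu>"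
    by (simp add: product_sigma_finite_def prob_space_imp_sigma_finite prob_space_\<mu>)
  have ZS: "ZS = PiM (insert p I) (\<lambda>_. \<mu>)"
    unfolding supersample_space_def I_def p_def using \<open>i < n\<close> by (simp add: insert_absorb)
  have I: "finite I" "p \<notin> I"
    unfolding I_def by auto
  have selected_upd: "selected_sample n (z(p := y)) u = selected_sample n z u" for z y
    using \<open>u i\<close> unfolding selected_sample_def p_def by (auto simp: fun_eq_iff)
  have "(\<lambda>z. (selected_sample n z u, z p)) \<in> ZS \<rightarrow>\<^sub>M SS \<Otimes>\<^sub>M \<mu>"
    using \<open>i < n\<close> unfolding p_def by (intro measurable_Pair measurable_selected_sample_fixed)
      (simp add: supersample_space_def)
  from measurable_compose[OF this measurable_test_loss]
  have "(\<lambda>z. test_loss (selected_sample n z u) (z p)) \<in> borel_measurable ZS"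
    by simp
  then have "(\<integral>\<^sup>+z. test_loss (selected_sample n z u) (z p) \<partial>ZS)
      = (\<integral>\<^sup>+z. \<integral>\<^sup>+y. test_loss (selected_sample n (z(p := y)) u) y \<partial>\<mu> \<partial>PiM I (\<lambda>_. \<mu>))"
    unfolding ZS by (subst product_nn_integral_insert[OF I]) auto
  also have "\<dots> = (\<integral>\<^sup>+z. \<integral>\<^sup>+y. risk (selected_sample n (z(p := y)) u) \<partial>\<mu> \<partial>PiM I (\<lambda>_. \<mu>))"
    by (simp add: selected_upd risk_def \<mu>.emeasure_space_1)
  also have "\<dots> = (\<integral>\<^sup>+z. risk (selected_sample n z u) \<partial>ZS)"
    unfolding ZS by (rule product_nn_integral_insert[OF I, symmetric]) (simp add: ZS[symmetric])
  finally show ?thesis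
    unfolding p_def nn_integral_risk_selected .
qed

lemma emeasure_selector_coord:
  assumes "i < n"
  shows "emeasure US {u \<in> space US. u i = b} = 1/2"
proof -
  have "distr US (measure_pmf (bernoulli_pmf (1/2))) (\<lambda>u. u i) = measure_pmf (bernoulli_pmf (1/2))"
    unfolding selector_space_def using assms
    by (intro distr_PiM_component) (auto simp: prob_space_measure_pmf)
  moreover have "emeasure US {u \<in> space US. u i = b}
      = emeasure (distr US (measure_pmf (bernoulli_pmf (1/2))) (\<lambda>u. u i)) {b}"
    using assms by (subst emeasure_distr) (auto simp: selector_space_def intro!: arg_cong2[where f=emeasure])
  ultimately show ?thesis
    by (simp add: emeasure_pmf_single divide_ennreal_def)
qed

lemma nn_integral_test_loss_selected:
  assumes "i < n"
  shows "(\<integral>\<^sup>+zu. (if snd zu i then test_loss (selected_sample n (fst zu) (snd zu)) (fst zu (i, False)) else 0) \<partial>ZU)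
    = expected_risk / 2"
proof -
  note [measurable] = measurable_supersample_coord[OF assms] measurable_selector_coord[OF assms]
  have "(\<lambda>zu. (selected_sample n (fst zu) (snd zu), fst zu (i, False))) \<in> ZU \<rightarrow>\<^sub>M SS \<Otimes>\<^sub>M \<mu>"
    by measurable
  from measurable_compose[OF this measurable_test_loss]
  have "(\<lambda>zu. if snd zu i then test_loss (selected_sample n (fst zu) (snd zu)) (fst zu (i, False)) else 0)
      \<in> borel_measurable ZU"
    by measurable
  then have "(\<integral>\<^sup>+zu. (if snd zu i then test_loss (selected_sample n (fst zu) (snd zu)) (fst zu (i, False)) else 0) \<partial>ZU)
      = (\<integral>\<^sup>+u. \<integral>\<^sup>+z. (if u i then test_loss (selected_sample n z u) (z (i, False)) else 0) \<partial>ZS \<partial>US)"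
    using nn_integral_ZU by (simp only: fst_conv snd_conv)
  also have "\<dots> = (\<integral>\<^sup>+u. expected_risk * indicator {u \<in> space US. u i = True} u \<partial>US)"
    using assms by (intro nn_integral_cong) (auto simp: nn_integral_test_loss_ghost indicator_def)
  also have "\<dots> = expected_risk / 2"
    using emeasure_selector_coord[OF assms, of True]
    by (subst nn_integral_cmult_indicator) (auto simp: divide_ennreal_def)
  finally show ?thesis .
qed

lemma measurable_Lplus:
  assumes "i < n"
  shows "Lplus f i \<in> J \<rightarrow>\<^sub>M count_space UNIV"
proof -
  note [measurable (raw)] = measurable_supersample_coord[OF assms]
  show ?thesis
    unfolding Lplus_def by (subst measurable_cong_sets[OF sets_J refl]) measurable
qed

lemma measurable_Usel:
  assumes "i < n"
  shows "Usel i \<in> J \<rightarrow>\<^sub>M count_space UNIV"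
proof -
  note [measurable (raw)] = measurable_selector_coord[OF assms]
  show ?thesis
    unfolding Usel_def by (subst measurable_cong_sets[OF sets_J refl]) measurable
qed

lemma Lplus_image: "Lplus f i ` space J \<subseteq> {0, 1}"
  by (auto simp: Lplus_def zo_loss_def)

lemma emeasure_Lplus_selected:
  assumes "i < n"
  shows "emeasure J {\<omega> \<in> space J. Lplus f i \<omega> = 1 \<and> Usel i \<omega>} = expected_risk / 2"
proof -
  note [measurable] = measurable_supersample_coord[OF assms] measurable_selector_coord[OF assms]
    measurable_Lplus[OF assms] measurable_Usel[OF assms]
  define h where
    "h \<omega> = (if snd (fst \<omega>) i then ennreal (zo_loss f (snd \<omega>) (fst (fst \<omega>) (i, False))) else 0)" for \<omega>
  have [measurable]: "h \<in> borel_measurable (ZU \<Otimes>\<^sub>M Wsp)"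
    unfolding h_def by measurable
  have "{\<omega> \<in> space J. Lplus f i \<omega> = 1 \<and> Usel i \<omega>} \<in> sets J"
    by measurable
  then have "emeasure J {\<omega> \<in> space J. Lplus f i \<omega> = 1 \<and> Usel i \<omega>}
      = (\<integral>\<^sup>+\<omega>. indicator {\<omega> \<in> space J. Lplus f i \<omega> = 1 \<and> Usel i \<omega>} \<omega> \<partial>J)"
    by simp
  also have "\<dots> = (\<integral>\<^sup>+\<omega>. h \<omega> \<partial>J)"
    by (intro nn_integral_cong) (auto simp: h_def indicator_def Lplus_def Usel_def zo_loss_def)
  also have "\<dots> = (\<integral>\<^sup>+zu. \<integral>\<^sup>+w. h (zu, w) \<partial>A (selected_sample n (fst zu) (snd zu)) \<partial>ZU)"
    by (rule nn_integral_J) measurable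
  also have "\<dots> = (\<integral>\<^sup>+zu. (if snd zu i then test_loss (selected_sample n (fst zu) (snd zu)) (fst zu (i, False)) else 0) \<partial>ZU)"
    by (intro nn_integral_cong) (simp add: h_def test_loss_def)
  finally show ?thesis
    unfolding nn_integral_test_loss_selected[OF assms] .
qed

lemma prob_Lplus_eq_1:
  assumes "i < n"
    and interpolating: "AE \<omega> in J. zo_loss f (snd \<omega>) (fst (fst \<omega>) (i, snd (fst \<omega>) i)) = 0"
  shows "\<P>(\<omega> in J. Lplus f i \<omega> = 1) = pop_risk n \<mu> Wsp A f / 2"
proof -
  note [measurable] = measurable_Lplus[OF assms(1)] measurable_Usel[OF assms(1)]
  have "AE \<omega> in J. Lplus f i \<omega> = 1 \<longleftrightarrow> Lplus f i \<omega> = 1 \<and> Usel i \<omega>"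
    using interpolating
  proof eventually_elim
    case (elim \<omega>)
    then show ?case
      by (cases "Usel i \<omega>") (auto simp: Lplus_def Usel_def)
  qed
  then have "\<P>(\<omega> in J. Lplus f i \<omega> = 1) = \<P>(\<omega> in J. Lplus f i \<omega> = 1 \<and> Usel i \<omega>)"
    by (intro J.finite_measure_eq_AE) auto
  moreover have "ennreal \<P>(\<omega> in J. Lplus f i \<omega> = 1 \<and> Usel i \<omega>) = ennreal (pop_risk n \<mu> Wsp A f / 2)"
    using emeasure_Lplus_selected[OF assms(1)] pop_risk_nonneg
    by (simp add: J.emeasure_eq_measure expected_risk_eq_pop_risk ennreal_divide_numeral)
  ultimately show ?thesis
    using pop_risk_nonneg by simp
qed

end

theorem theorem7:
  fixes n :: nat
    and \<mu> :: "('x \<times> 'y) measure"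
    and Wsp :: "'w measure"
    and A :: "(nat \<Rightarrow> 'x \<times> 'y) \<Rightarrow> 'w measure"
    and f :: "'w \<Rightarrow> 'x \<Rightarrow> 'y"
  assumes mu: "prob_space \<mu>"
    and alg: "A \<in> PiM {..<n} (\<lambda>_. \<mu>) \<rightarrow>\<^sub>M prob_algebra Wsp"
    and loss_meas: "(\<lambda>p. zo_loss f (fst p) (snd p)) \<in> Wsp \<Otimes>\<^sub>M \<mu> \<rightarrow>\<^sub>M count_space UNIV"
    and interp: "\<And>i. i < n \<Longrightarrow>
       AE \<omega> in joint_law n \<mu> Wsp A. zo_loss f (snd \<omega>) (fst (fst \<omega>) (i, snd (fst \<omega>) i)) = 0"
  shows "(\<Sum>i<n. prob_space.mutual_information (joint_law n \<mu> Wsp A) (exp 1)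
              (count_space UNIV) (count_space UNIV) (Lplus f i) (Usel i)) / real n
         \<le> bin_entropy (pop_risk n \<mu> Wsp A f / 2)"
proof -
  interpret supersample_learning n \<mu> Wsp A f
    using mu alg loss_meas by (rule supersample_learning.intro)
  let ?H = "bin_entropy (pop_risk n \<mu> Wsp A f / 2)"
  have "J.mutual_information (exp 1) (count_space UNIV) (count_space UNIV) (Lplus f i) (Usel i) \<le> ?H"
    if "i < n" for i
  proof -
    have "J.mutual_information (exp 1) (count_space UNIV) (count_space UNIV) (Lplus f i) (Usel i)
        \<le> bin_entropy \<P>(\<omega> in J. Lplus f i \<omega> = 1)"
      by (intro J.mutual_information_le_bin_entropy[where BY = UNIV]
          measurable_Lplus[OF that] measurable_Usel[OF that] Lplus_image) simp_all
    then show ?thesis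
      by (simp only: prob_Lplus_eq_1[OF that interp[OF that]])
  qed
  then have "(\<Sum>i<n. J.mutual_information (exp 1) (count_space UNIV) (count_space UNIV) (Lplus f i) (Usel i))
      \<le> real n * ?H"
    using sum_mono[where K = "{..<n}" and g = "\<lambda>_. ?H"] by simp
  moreover have "0 \<le> ?H"
    using pop_risk_nonneg pop_risk_le_1 by (intro bin_entropy_nonneg) auto
  ultimately show ?thesis
    by (cases "n = 0") (simp_all add: divide_le_eq mult.commute)
qed

end
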